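(* For every $g\in\mathscr T'$, the map $e^{a(g)}:\mathcal F_{\rm fin}(\mathscr T)\to\mathcal F_{\rm fin}(\mathscr T)$ is injective.
   Context: Let $\mathfrak h$ be a complex Hilbert space, $\mathscr T$ a topological vector space continuously embedded in $\mathfrak h$ with dense image, and $\mathscr T'$ the space of continuous antilinear functionals on $\mathscr T$; write $\langle\varphi,f\rangle:=\overline{\varphi(f)}$ for $\varphi\in\mathscr T'$, $f\in\mathscr T$. $\mathcal F(\mathfrak h)$ is the symmetric Fock space over $\mathfrak h$, and $\mathcal F_{\rm fin}(\mathscr T)$ the space of vectors with finitely many nonzero components, the $n$-th in the algebraic symmetric tensor product of $n$ copies of $\mathscr T$. For $g\in\mathscr T'$, $a(g):\mathcal F_{\rm fin}(\mathscr T)\to\mathcal F_{\rm fin}(\mathscr T)$ is defined linearly by $(a(g)\Psi)_n=\frac{\sqrt{n+1}}{(n+1)!}\sum_{\sigma\in S_{n+1}}\langle g,\psi_{\sigma(1)}\rangle\,\psi_{\sigma(2)}\otimes\cdots\otimes\psi_{\sigma(n+1)}$ for $\Psi_{n+1}=\psi_1\otimes_s\cdots\otimes_s\psi_{n+1}$, and $e^{a(g)}:=\sum_{k\ge0}a(g)^k/k!$, which is a finite sum on each vector of $\mathcal F_{\rm fin}(\mathscr T)$. *)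

theory Defs
  imports "HOL-Analysis.Analysis" "HOL-Combinatorics.Permutations"
begin

text \<open>Complex vector spaces are rendered as an additive group type together with an
  explicit complex scalar multiplication satisfying the library locale vector_space
  (the HOL library has no complex_vector type class).\<close>

definition complex_inner_product ::
  "(complex \<Rightarrow> 'h::ab_group_add \<Rightarrow> 'h) \<Rightarrow> ('h \<Rightarrow> 'h \<Rightarrow> complex) \<Rightarrow> bool" where
  "complex_inner_product smul ip \<longleftrightarrow>
     vector_space smul \<and>
     (\<forall>x y z. ip x (y + z) = ip x y + ip x z) \<and>
     (\<forall>x y c. ip x (smul c y) = c * ip x y) \<and>
     (\<forall>x y. ip y x = cnj (ip x y)) \<and>
     (\<forall>x. 0 \<le> Re (ip x x)) \<and>
     (\<forall>x. ip x x = 0 \<longrightarrow> x = 0)"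

definition ip_norm :: "('h \<Rightarrow> 'h \<Rightarrow> complex) \<Rightarrow> 'h \<Rightarrow> real" where
  "ip_norm ip x = sqrt (Re (ip x x))"

definition complex_hilbert_space ::
  "(complex \<Rightarrow> 'h::ab_group_add \<Rightarrow> 'h) \<Rightarrow> ('h \<Rightarrow> 'h \<Rightarrow> complex) \<Rightarrow> bool" where
  "complex_hilbert_space smul ip \<longleftrightarrow>
     complex_inner_product smul ip \<and>
     (\<forall>X::nat \<Rightarrow> 'h.
        (\<forall>e>0. \<exists>N. \<forall>m\<ge>N. \<forall>n\<ge>N. ip_norm ip (X m - X n) < e) \<longrightarrow>
        (\<exists>L. (\<lambda>n. ip_norm ip (X n - L)) \<longlonglongrightarrow> 0))"

definition complex_tvs :: "(complex \<Rightarrow> 't::{ab_group_add,topological_space} \<Rightarrow> 't) \<Rightarrow> bool" where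
  "complex_tvs smul \<longleftrightarrow>
     vector_space smul \<and>
     continuous_on UNIV (\<lambda>p::'t \<times> 't. fst p + snd p) \<and>
     continuous_on UNIV (\<lambda>p::complex \<times> 't. smul (fst p) (snd p))"

definition continuous_dense_embedding ::
  "(complex \<Rightarrow> 't::{ab_group_add,topological_space} \<Rightarrow> 't) \<Rightarrow> (complex \<Rightarrow> 'h::ab_group_add \<Rightarrow> 'h)
   \<Rightarrow> ('h \<Rightarrow> 'h \<Rightarrow> complex) \<Rightarrow> ('t \<Rightarrow> 'h) \<Rightarrow> bool" where
  "continuous_dense_embedding smulT smulH ip \<iota> \<longleftrightarrow>
     Vector_Spaces.linear smulT smulH \<iota> \<and> inj \<iota> \<and>
     (\<forall>x e. e > 0 \<longrightarrow> (\<exists>U. open U \<and> x \<in> U \<and> (\<forall>y\<in>U. ip_norm ip (\<iota> y - \<iota> x) < e))) \<and>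
     (\<forall>h e. e > 0 \<longrightarrow> (\<exists>x. ip_norm ip (\<iota> x - h) < e))"

definition antidual :: "(complex \<Rightarrow> 't::{ab_group_add,topological_space} \<Rightarrow> 't) \<Rightarrow> ('t \<Rightarrow> complex) set" where
  "antidual smulT = {g. (\<forall>x y. g (x + y) = g x + g y) \<and>
                        (\<forall>c x. g (smulT c x) = cnj c * g x) \<and> continuous_on UNIV g}"

definition dual_pairing :: "('t \<Rightarrow> complex) \<Rightarrow> 't \<Rightarrow> complex" where
  "dual_pairing g f = cnj (g f)"

text \<open>A vector of F_fin(T) is represented by a finitely supported coefficient function
  on lists: \<Psi> stands for the sum over lists ps of (\<Psi> ps) times
  ps!0 \<otimes>s ... \<otimes>s ps!(n-1) (n = length ps), where
  \<psi>1 \<otimes>s ... \<otimes>s \<psi>n = (1/n!) \<Sum>\<sigma> \<psi>\<sigma>(1) \<otimes> ... \<otimes> \<psi>\<sigma>(n).\<close>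
type_synonym 't fock_rep = "'t list \<Rightarrow> complex"

definition fock_fin :: "'t fock_rep \<Rightarrow> bool" where
  "fock_fin \<Psi> \<longleftrightarrow> finite {ps. \<Psi> ps \<noteq> 0}"

text \<open>Inner product in h^{\<otimes>n} of w1 \<otimes> ... \<otimes> wn with \<psi>1 \<otimes>s ... \<otimes>s \<psi>n.\<close>
definition sym_tensor_pairing ::
  "('h \<Rightarrow> 'h \<Rightarrow> complex) \<Rightarrow> ('t \<Rightarrow> 'h) \<Rightarrow> 'h list \<Rightarrow> 't list \<Rightarrow> complex" where
  "sym_tensor_pairing ip \<iota> ws ps =
     (1 / of_nat (fact (length ps))) *
     (\<Sum>\<sigma>\<in>{\<sigma>. \<sigma> permutes {..<length ps}}. \<Prod>i<length ps. ip (ws ! i) (\<iota> (ps ! \<sigma> i)))"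

text \<open>Inner product of w1 \<otimes> ... \<otimes> wn (n = length ws) with the n-th component of the
  Fock vector represented by \<Psi>.\<close>
definition fock_pairing ::
  "('h \<Rightarrow> 'h \<Rightarrow> complex) \<Rightarrow> ('t \<Rightarrow> 'h) \<Rightarrow> 't fock_rep \<Rightarrow> 'h list \<Rightarrow> complex" where
  "fock_pairing ip \<iota> \<Psi> ws =
     (\<Sum>ps\<in>{ps. \<Psi> ps \<noteq> 0 \<and> length ps = length ws}. \<Psi> ps * sym_tensor_pairing ip \<iota> ws ps)"

text \<open>Two representatives give the same vector of F(h) iff all their components have
  the same inner products with all simple tensors (which are total in h^{\<otimes>n}).\<close>
definition fock_eq ::
  "('h \<Rightarrow> 'h \<Rightarrow> complex) \<Rightarrow> ('t \<Rightarrow> 'h) \<Rightarrow> 't fock_rep \<Rightarrow> 't fock_rep \<Rightarrow> bool" where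
  "fock_eq ip \<iota> \<Psi> \<Phi> \<longleftrightarrow> (\<forall>ws. fock_pairing ip \<iota> \<Psi> ws = fock_pairing ip \<iota> \<Phi> ws)"

text \<open>Annihilation operator a(g): the term \<psi>1 \<otimes>s ... \<otimes>s \<psi>(n+1) is sent to
  sqrt(n+1)/(n+1)! \<Sum>\<sigma> <g,\<psi>\<sigma>(1)> \<psi>\<sigma>(2) \<otimes> ... \<otimes> \<psi>\<sigma>(n+1), extended linearly.
  Each summand is recorded as a symmetric-tensor term; since the sum over \<sigma> is symmetric,
  this represents the same vector.\<close>
definition annihilation :: "('t \<Rightarrow> complex) \<Rightarrow> 't fock_rep \<Rightarrow> 't fock_rep" where
  "annihilation g \<Psi> = (\<lambda>qs.
     (\<Sum>ps\<in>{ps. \<Psi> ps \<noteq> 0 \<and> length ps = Suc (length qs)}.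
        \<Sum>\<sigma>\<in>{\<sigma>. \<sigma> permutes {..<length ps} \<and> map (\<lambda>i. ps ! \<sigma> i) [1..<length ps] = qs}.
          \<Psi> ps * (of_real (sqrt (real (Suc (length qs)))) / of_nat (fact (Suc (length qs))))
               * dual_pairing g (ps ! \<sigma> 0)))"

definition fock_degree :: "'t fock_rep \<Rightarrow> nat" where
  "fock_degree \<Psi> = Max (insert 0 (length ` {ps. \<Psi> ps \<noteq> 0}))"

text \<open>e^{a(g)} = \<Sum>k a(g)^k / k!, a finite sum on F_fin(T) (a(g)^k \<Psi> = 0 for k > degree).\<close>
definition exp_annihilation :: "('t \<Rightarrow> complex) \<Rightarrow> 't fock_rep \<Rightarrow> 't fock_rep" where
  "exp_annihilation g \<Psi> = (\<lambda>qs.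
     \<Sum>k\<le>fock_degree \<Psi>. ((annihilation g ^^ k) \<Psi> qs) / of_nat (fact k))"

end

theory Submission
  imports Defs
begin

(* Put D = Psi - Phi; we must show that D is orthogonal to all simple tensors. As a(g) lowers
   the particle number by one, the n-particle part of e^{a(g)} D is
   D_n + sum_{k >= 1} a(g)^k D_{n+k} / k!, so a downward induction on n (D has bounded degree)
   reduces the claim to one step: if D_{n+1} is orthogonal to all simple tensors, so is
   a(g) D_{n+1}. For this step, contract D_{n+1} against w_1, ..., w_n in its last n slots to
   get a vector u of T. The pairing of a(g) D_{n+1} with w_1 x ... x w_n is a sum of such
   values <g, u> over the permutations of the w's, while <w, iota u> is a multiple of the
   pairing of D_{n+1} with w x w_1 x ... x w_n, which vanishes. Hence iota u = 0, so u = 0 and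
   <g, u> = 0. *)

lemma fock_fin_diff: "fock_fin \<Psi> \<Longrightarrow> fock_fin \<Phi> \<Longrightarrow> fock_fin (\<lambda>ps. \<Psi> ps - \<Phi> ps)"
  unfolding fock_fin_def
  by (rule finite_subset[of _ "{ps. \<Psi> ps \<noteq> 0} \<union> {ps. \<Phi> ps \<noteq> 0}"]) auto

lemma length_le_fock_degree: "fock_fin \<Psi> \<Longrightarrow> \<Psi> ps \<noteq> 0 \<Longrightarrow> length ps \<le> fock_degree \<Psi>"
  unfolding fock_degree_def fock_fin_def by (rule Max_ge) auto

lemma fock_degree_le:
  assumes "fock_fin \<Psi>" "\<And>ps. \<Psi> ps \<noteq> 0 \<Longrightarrow> length ps \<le> M"
  shows "fock_degree \<Psi> \<le> M"
  using assms unfolding fock_degree_def fock_fin_def by (subst Max_le_iff) auto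

lemma fock_pairing_superset:
  assumes "finite A" "{ps. \<Psi> ps \<noteq> 0 \<and> length ps = length ws} \<subseteq> A"
    and "\<And>ps. ps \<in> A \<Longrightarrow> length ps = length ws"
  shows "fock_pairing ip \<iota> \<Psi> ws = (\<Sum>ps\<in>A. \<Psi> ps * sym_tensor_pairing ip \<iota> ws ps)"
  unfolding fock_pairing_def by (rule sum.mono_neutral_left) (use assms in auto)

lemma fock_pairing_diff:
  assumes "fock_fin \<Psi>" "fock_fin \<Phi>"
  shows "fock_pairing ip \<iota> (\<lambda>ps. \<Psi> ps - \<Phi> ps) ws = fock_pairing ip \<iota> \<Psi> ws - fock_pairing ip \<iota> \<Phi> ws"
proof -
  define A where "A = {ps. (\<Psi> ps \<noteq> 0 \<or> \<Phi> ps \<noteq> 0) \<and> length ps = length ws}"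
  have "finite A"
    by (rule finite_subset[of _ "{ps. \<Psi> ps \<noteq> 0} \<union> {ps. \<Phi> ps \<noteq> 0}"])
      (use assms in \<open>auto simp: A_def fock_fin_def\<close>)
  then show ?thesis
    by (subst (1 2 3) fock_pairing_superset[of A]) (auto simp: A_def left_diff_distrib sum_subtractf)
qed

lemma fock_pairing_sum:
  assumes "finite K" "\<And>k. k \<in> K \<Longrightarrow> fock_fin (F k)"
  shows "fock_pairing ip \<iota> (\<lambda>ps. \<Sum>k\<in>K. c k * F k ps) ws = (\<Sum>k\<in>K. c k * fock_pairing ip \<iota> (F k) ws)"
proof -
  define A where "A = (\<Union>k\<in>K. {ps. F k ps \<noteq> 0 \<and> length ps = length ws})"
  have A: "finite A" "\<And>ps. ps \<in> A \<Longrightarrow> length ps = length ws"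
    using assms by (auto simp: A_def fock_fin_def)
  have "fock_pairing ip \<iota> (\<lambda>ps. \<Sum>k\<in>K. c k * F k ps) ws
      = (\<Sum>ps\<in>A. (\<Sum>k\<in>K. c k * F k ps) * sym_tensor_pairing ip \<iota> ws ps)"
    by (rule fock_pairing_superset[OF A(1) _ A(2)])
      (force simp: A_def dest: sum.not_neutral_contains_not_neutral)
  also have "\<dots> = (\<Sum>k\<in>K. c k * (\<Sum>ps\<in>A. F k ps * sym_tensor_pairing ip \<iota> ws ps))"
    by (simp add: sum_distrib_left sum_distrib_right sum.swap[of _ A] mult.assoc)
  also have "\<dots> = (\<Sum>k\<in>K. c k * fock_pairing ip \<iota> (F k) ws)"
    by (intro sum.cong refl arg_cong2[where f = "(*)"] fock_pairing_superset[symmetric] A)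
      (auto simp: A_def)
  finally show ?thesis .
qed

lemma annihilation_superset:
  assumes "finite A" "{ps. \<Psi> ps \<noteq> 0 \<and> length ps = Suc (length qs)} \<subseteq> A"
    and "\<And>ps. ps \<in> A \<Longrightarrow> length ps = Suc (length qs)"
  shows "annihilation g \<Psi> qs =
    (\<Sum>ps\<in>A. \<Sum>\<sigma> | \<sigma> permutes {..<length ps} \<and> map (\<lambda>i. ps ! \<sigma> i) [1..<length ps] = qs.
       \<Psi> ps * (of_real (sqrt (real (Suc (length qs)))) / of_nat (fact (Suc (length qs))))
         * dual_pairing g (ps ! \<sigma> 0))"
  unfolding annihilation_def by (rule sum.mono_neutral_left) (use assms in auto)

lemma annihilation_diff:
  assumes "fock_fin \<Psi>" "fock_fin \<Phi>"
  shows "annihilation g (\<lambda>ps. \<Psi> ps - \<Phi> ps) qs = annihilation g \<Psi> qs - annihilation g \<Phi> qs"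
proof -
  define A where "A = {ps. (\<Psi> ps \<noteq> 0 \<or> \<Phi> ps \<noteq> 0) \<and> length ps = Suc (length qs)}"
  have "finite A"
    by (rule finite_subset[of _ "{ps. \<Psi> ps \<noteq> 0} \<union> {ps. \<Phi> ps \<noteq> 0}"])
      (use assms in \<open>auto simp: A_def fock_fin_def\<close>)
  then show ?thesis
    by (subst (1 2 3) annihilation_superset[of A])
      (auto simp: A_def left_diff_distrib diff_divide_distrib sum_subtractf simp del: upt_Suc)
qed

lemma annihilation_neq_0D:
  assumes "annihilation g \<Psi> qs \<noteq> 0"
  obtains ps \<sigma> where "\<Psi> ps \<noteq> 0" "length ps = Suc (length qs)" "\<sigma> permutes {..<length ps}"
    and "map (\<lambda>i. ps ! \<sigma> i) [1..<length ps] = qs"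
proof -
  obtain ps where "ps \<in> {ps. \<Psi> ps \<noteq> 0 \<and> length ps = Suc (length qs)}"
    and "(\<Sum>\<sigma> | \<sigma> permutes {..<length ps} \<and> map (\<lambda>i. ps ! \<sigma> i) [1..<length ps] = qs.
       \<Psi> ps * (of_real (sqrt (real (Suc (length qs)))) / of_nat (fact (Suc (length qs))))
         * dual_pairing g (ps ! \<sigma> 0)) \<noteq> 0"
    by (rule sum.not_neutral_contains_not_neutral[OF assms[unfolded annihilation_def]])
  moreover from this(2) obtain \<sigma>
    where "\<sigma> \<in> {\<sigma>. \<sigma> permutes {..<length ps} \<and> map (\<lambda>i. ps ! \<sigma> i) [1..<length ps] = qs}"
    by (rule sum.not_neutral_contains_not_neutral)
  ultimately show thesis
    using that by blast
qed

lemma fock_fin_annihilation: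
  assumes "fock_fin \<Psi>"
  shows "fock_fin (annihilation g \<Psi>)"
proof -
  have "{qs. annihilation g \<Psi> qs \<noteq> 0} \<subseteq> (\<Union>ps\<in>{ps. \<Psi> ps \<noteq> 0}.
      (\<lambda>\<sigma>. map (\<lambda>i. ps ! \<sigma> i) [1..<length ps]) ` {\<sigma>. \<sigma> permutes {..<length ps}})"
    by (blast elim: annihilation_neq_0D)
  moreover have "finite \<dots>"
    using assms unfolding fock_fin_def by (intro finite_UN_I finite_imageI finite_permutations) auto
  ultimately show ?thesis
    unfolding fock_fin_def by (rule finite_subset)
qed

lemma fock_fin_annihilation_pow: "fock_fin \<Psi> \<Longrightarrow> fock_fin ((annihilation g ^^ k) \<Psi>)"
  by (induction k) (simp_all add: fock_fin_annihilation)

lemma annihilation_pow_diff: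
  assumes "fock_fin \<Psi>" "fock_fin \<Phi>"
  shows "(annihilation g ^^ k) (\<lambda>ps. \<Psi> ps - \<Phi> ps) =
    (\<lambda>qs. (annihilation g ^^ k) \<Psi> qs - (annihilation g ^^ k) \<Phi> qs)"
  by (induction k) (simp_all add: annihilation_diff fock_fin_annihilation_pow assms)

lemma annihilation_pow_neq_0D:
  "(annihilation g ^^ k) \<Psi> qs \<noteq> 0 \<Longrightarrow> \<exists>ps. \<Psi> ps \<noteq> 0 \<and> length ps = length qs + k"
proof (induction k arbitrary: qs)
  case (Suc k)
  then obtain ps where "(annihilation g ^^ k) \<Psi> ps \<noteq> 0" "length ps = Suc (length qs)"
    by (auto elim: annihilation_neq_0D)
  then show ?case using Suc.IH by fastforce
qed auto

lemma exp_annihilation_eq_sum: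
  assumes "fock_fin \<Psi>" "fock_degree \<Psi> \<le> M"
  shows "exp_annihilation g \<Psi> = (\<lambda>qs. \<Sum>k\<le>M. (1 / fact k) * (annihilation g ^^ k) \<Psi> qs)"
proof
  fix qs
  have "(annihilation g ^^ k) \<Psi> qs = 0" if "fock_degree \<Psi> < k" for k
    using that annihilation_pow_neq_0D[of k g \<Psi> qs] length_le_fock_degree[OF assms(1)] by fastforce
  then show "exp_annihilation g \<Psi> qs = (\<Sum>k\<le>M. (1 / fact k) * (annihilation g ^^ k) \<Psi> qs)"
    unfolding exp_annihilation_def using assms(2)
    by (intro sum.mono_neutral_cong_left) auto
qed

lemma fock_pairing_exp_annihilation:
  assumes "fock_fin \<Psi>" "fock_degree \<Psi> \<le> M"
  shows "fock_pairing ip \<iota> (exp_annihilation g \<Psi>) ws =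
    (\<Sum>k\<le>M. (1 / fact k) * fock_pairing ip \<iota> ((annihilation g ^^ k) \<Psi>) ws)"
  unfolding exp_annihilation_eq_sum[OF assms]
  by (rule fock_pairing_sum) (simp_all add: fock_fin_annihilation_pow assms(1))

lemma fock_pairing_exp_annihilation_diff:
  assumes "fock_fin \<Psi>" "fock_fin \<Phi>"
  shows "fock_pairing ip \<iota> (exp_annihilation g (\<lambda>ps. \<Psi> ps - \<Phi> ps)) ws =
    fock_pairing ip \<iota> (exp_annihilation g \<Psi>) ws - fock_pairing ip \<iota> (exp_annihilation g \<Phi>) ws"
proof -
  define M where "M = max (fock_degree \<Psi>) (fock_degree \<Phi>)"
  have degree_le: "fock_degree \<Psi> \<le> M" "fock_degree \<Phi> \<le> M"
    by (simp_all add: M_def)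
  have degree_diff_le: "fock_degree (\<lambda>ps. \<Psi> ps - \<Phi> ps) \<le> M"
  proof (rule fock_degree_le[OF fock_fin_diff[OF assms]])
    fix ps
    assume "\<Psi> ps - \<Phi> ps \<noteq> 0"
    then have "\<Psi> ps \<noteq> 0 \<or> \<Phi> ps \<noteq> 0"
      by auto
    then show "length ps \<le> M"
      using length_le_fock_degree[OF assms(1), of ps] length_le_fock_degree[OF assms(2), of ps]
      by (auto simp: M_def)
  qed
  show ?thesis
    unfolding fock_pairing_exp_annihilation[OF assms(1) degree_le(1)]
      fock_pairing_exp_annihilation[OF assms(2) degree_le(2)]
      fock_pairing_exp_annihilation[OF fock_fin_diff[OF assms] degree_diff_le]
    by (simp add: annihilation_pow_diff fock_pairing_diff fock_fin_annihilation_pow assms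
        right_diff_distrib sum_subtractf)
qed

definition contracted_pairing ::
  "('h \<Rightarrow> 'h \<Rightarrow> complex) \<Rightarrow> ('t \<Rightarrow> 'h) \<Rightarrow> 't fock_rep \<Rightarrow> 'h list \<Rightarrow> ('t \<Rightarrow> complex) \<Rightarrow> complex" where
  "contracted_pairing ip \<iota> \<Psi> vs \<phi> =
     (\<Sum>ps | \<Psi> ps \<noteq> 0 \<and> length ps = Suc (length vs). \<Sum>\<sigma> | \<sigma> permutes {..<Suc (length vs)}.
        \<Psi> ps * (\<Prod>i<length vs. ip (vs ! i) (\<iota> (ps ! \<sigma> (Suc i)))) * \<phi> (ps ! \<sigma> 0))"

lemma fock_pairing_Cons:
  "fock_pairing ip \<iota> \<Psi> (w # vs) =
     contracted_pairing ip \<iota> \<Psi> vs (\<lambda>t. ip w (\<iota> t)) / fact (Suc (length vs))"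
proof -
  have "sym_tensor_pairing ip \<iota> (w # vs) ps = (\<Sum>\<sigma> | \<sigma> permutes {..<Suc (length vs)}.
      (\<Prod>i<length vs. ip (vs ! i) (\<iota> (ps ! \<sigma> (Suc i)))) * ip w (\<iota> (ps ! \<sigma> 0))) / fact (Suc (length vs))"
    if "length ps = Suc (length vs)" for ps
    unfolding sym_tensor_pairing_def that prod.lessThan_Suc_shift
    by (simp add: mult.commute del: fact_Suc)
  then show ?thesis
    by (simp add: fock_pairing_def contracted_pairing_def sum_divide_distrib sum_distrib_left mult.assoc)
qed

lemma sym_tensor_pairing_permute_left:
  assumes "length qs = length ws"
  shows "sym_tensor_pairing ip \<iota> ws qs = (\<Sum>\<tau> | \<tau> permutes {..<length ws}.
    \<Prod>i<length ws. ip (permute_list \<tau> ws ! i) (\<iota> (qs ! i))) / fact (length ws)"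
proof -
  have "(\<Prod>i<length ws. ip (ws ! i) (\<iota> (qs ! inv \<tau> i))) =
      (\<Prod>i<length ws. ip (permute_list \<tau> ws ! i) (\<iota> (qs ! i)))"
    if "\<tau> permutes {..<length ws}" for \<tau>
    using that by (subst prod.permute[OF that]) (simp add: permutes_inverses(2) permute_list_nth)
  then show ?thesis
    unfolding sym_tensor_pairing_def assms
    by (subst sum_permutations_inverse) simp
qed

lemma fock_pairing_annihilation_expand:
  fixes \<Psi> :: "'t fock_rep"
  assumes "fock_fin \<Psi>"
  shows "fock_pairing ip \<iota> (annihilation g \<Psi>) ws =
    (\<Sum>(ps, \<sigma>) \<in> {ps. \<Psi> ps \<noteq> 0 \<and> length ps = Suc (length ws)} \<times> {\<sigma>. \<sigma> permutes {..<Suc (length ws)}}.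
       \<Psi> ps * (sqrt (Suc (length ws)) / fact (Suc (length ws))) * dual_pairing g (ps ! \<sigma> 0) *
       sym_tensor_pairing ip \<iota> ws (map (\<lambda>i. ps ! \<sigma> i) [1..<Suc (length ws)]))"
proof -
  define n where "n = length ws"
  define A where "A = {ps. \<Psi> ps \<noteq> 0 \<and> length ps = Suc n}"
  define P where "P = {\<sigma>. \<sigma> permutes {..<Suc n}}"
  define T :: "'t list \<times> (nat \<Rightarrow> nat) \<Rightarrow> 't list"
    where "T = (\<lambda>(ps, \<sigma>). map (\<lambda>i. ps ! \<sigma> i) [1..<Suc n])"
  define h :: "'t list \<times> (nat \<Rightarrow> nat) \<Rightarrow> complex"
    where "h = (\<lambda>(ps, \<sigma>). \<Psi> ps * (sqrt (Suc n) / fact (Suc n)) * dual_pairing g (ps ! \<sigma> 0))"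
  have "finite A" "finite P"
    using assms by (simp_all add: A_def P_def fock_fin_def finite_permutations)
  then have fin: "finite (A \<times> P)"
    by simp
  have length_T: "length (T x) = n" for x
    by (simp add: T_def split: prod.split)
  have ann: "annihilation g \<Psi> qs = sum h {x \<in> A \<times> P. T x = qs}" if "length qs = n" for qs
  proof -
    have "annihilation g \<Psi> qs = (\<Sum>ps\<in>A. \<Sum>\<sigma>\<in>{\<sigma> \<in> P. T (ps, \<sigma>) = qs}. h (ps, \<sigma>))"
      unfolding annihilation_def using that
      by (intro sum.cong) (auto simp: A_def P_def T_def h_def simp del: upt_Suc fact_Suc)
    also have "\<dots> = (\<Sum>x\<in>(SIGMA ps:A. {\<sigma> \<in> P. T (ps, \<sigma>) = qs}). h x)"
      using \<open>finite A\<close> \<open>finite P\<close> by (subst sum.Sigma) (auto simp: case_prod_beta)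
    also have "(SIGMA ps:A. {\<sigma> \<in> P. T (ps, \<sigma>) = qs}) = {x \<in> A \<times> P. T x = qs}"
      by auto
    finally show ?thesis .
  qed
  have "fock_pairing ip \<iota> (annihilation g \<Psi>) ws =
      (\<Sum>qs\<in>T ` (A \<times> P). annihilation g \<Psi> qs * sym_tensor_pairing ip \<iota> ws qs)"
  proof (rule fock_pairing_superset)
    show "{qs. annihilation g \<Psi> qs \<noteq> 0 \<and> length qs = length ws} \<subseteq> T ` (A \<times> P)"
    proof
      fix qs assume "qs \<in> {qs. annihilation g \<Psi> qs \<noteq> 0 \<and> length qs = length ws}"
      then have nonzero: "annihilation g \<Psi> qs \<noteq> 0" and len: "length qs = n"
        by (simp_all add: n_def)
      from nonzero have "sum h {x \<in> A \<times> P. T x = qs} \<noteq> 0"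
        unfolding ann[OF len] .
      then obtain x where "x \<in> {x \<in> A \<times> P. T x = qs}"
        by (rule sum.not_neutral_contains_not_neutral)
      then show "qs \<in> T ` (A \<times> P)"
        by (auto intro: rev_image_eqI)
    qed
  qed (use fin length_T n_def in auto)
  also have "\<dots> = (\<Sum>qs\<in>T ` (A \<times> P). \<Sum>x\<in>{x \<in> A \<times> P. T x = qs}. h x * sym_tensor_pairing ip \<iota> ws (T x))"
    by (intro sum.cong refl) (auto simp: ann length_T sum_distrib_right)
  also have "\<dots> = (\<Sum>x\<in>A \<times> P. h x * sym_tensor_pairing ip \<iota> ws (T x))"
    using fin by (intro sum.group) auto
  finally show ?thesis
    by (simp add: A_def P_def T_def h_def n_def case_prod_beta del: upt_Suc fact_Suc)
qed

lemma fock_pairing_annihilation: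
  fixes \<Psi> :: "'t fock_rep"
  assumes "fock_fin \<Psi>"
  shows "fock_pairing ip \<iota> (annihilation g \<Psi>) ws =
    sqrt (Suc (length ws)) / (fact (Suc (length ws)) * fact (length ws)) *
    (\<Sum>\<tau> | \<tau> permutes {..<length ws}. contracted_pairing ip \<iota> \<Psi> (permute_list \<tau> ws) (dual_pairing g))"
proof -
  define n where "n = length ws"
  define c :: complex where "c = sqrt (Suc n) / fact (Suc n)"
  define A where "A = {ps. \<Psi> ps \<noteq> 0 \<and> length ps = Suc n}"
  define P where "P = {\<sigma>. \<sigma> permutes {..<Suc n}}"
  define Q where "Q = {\<tau>. \<tau> permutes {..<n}}"
  define K where "K = (\<lambda>\<tau> ps \<sigma>. \<Prod>i<n. ip (permute_list \<tau> ws ! i) (\<iota> (ps ! \<sigma> (Suc i))))"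
  have tail: "sym_tensor_pairing ip \<iota> ws (map (\<lambda>i. ps ! \<sigma> i) [1..<Suc n]) = (\<Sum>\<tau>\<in>Q. K \<tau> ps \<sigma>) / fact n"
    for ps and \<sigma> :: "nat \<Rightarrow> nat"
    by (simp add: sym_tensor_pairing_permute_left n_def Q_def K_def nth_map_upt del: upt_Suc)
  have "fock_pairing ip \<iota> (annihilation g \<Psi>) ws =
      (\<Sum>(ps, \<sigma>)\<in>A \<times> P. \<Psi> ps * c * dual_pairing g (ps ! \<sigma> 0) * ((\<Sum>\<tau>\<in>Q. K \<tau> ps \<sigma>) / fact n))"
    unfolding fock_pairing_annihilation_expand[OF assms] tail[symmetric]
    by (simp add: A_def P_def c_def n_def del: upt_Suc fact_Suc)
  also have "\<dots> = c / fact n * (\<Sum>\<tau>\<in>Q. \<Sum>(ps, \<sigma>)\<in>A \<times> P. \<Psi> ps * K \<tau> ps \<sigma> * dual_pairing g (ps ! \<sigma> 0))"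
    by (simp add: sum_distrib_left sum_distrib_right sum_divide_distrib sum.swap[of _ Q] split_def mult_ac)
  also have "\<dots> = sqrt (Suc n) / (fact (Suc n) * fact n) *
      (\<Sum>\<tau>\<in>Q. contracted_pairing ip \<iota> \<Psi> (permute_list \<tau> ws) (dual_pairing g))"
    by (simp add: c_def contracted_pairing_def sum.cartesian_product A_def P_def K_def n_def)
  finally show ?thesis
    by (simp add: n_def Q_def)
qed

locale embedded_inner_product_space =
  fixes smulH :: "complex \<Rightarrow> 'h::ab_group_add \<Rightarrow> 'h" and ip :: "'h \<Rightarrow> 'h \<Rightarrow> complex"
    and smulT :: "complex \<Rightarrow> 't::ab_group_add \<Rightarrow> 't" and \<iota> :: "'t \<Rightarrow> 'h"
  assumes inner_product: "complex_inner_product smulH ip"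
    and linear_embedding: "Vector_Spaces.linear smulT smulH \<iota>"
    and inj_embedding: "inj \<iota>"
begin

lemma inner_add_right: "ip w (x + y) = ip w x + ip w y"
  using inner_product unfolding complex_inner_product_def by metis

lemma inner_scale_right: "ip w (smulH c x) = c * ip w x"
  using inner_product unfolding complex_inner_product_def by metis

lemma inner_self_eq_0D: "ip x x = 0 \<Longrightarrow> x = 0"
  using inner_product unfolding complex_inner_product_def by metis

lemma embedding_add: "\<iota> (s + t) = \<iota> s + \<iota> t"
  using linear_embedding by (simp add: Vector_Spaces.linear_iff)

lemma embedding_scale: "\<iota> (smulT c t) = smulH c (\<iota> t)"
  using linear_embedding by (simp add: Vector_Spaces.linear_iff)

lemma additive_inner_embedding: "Modules.additive (\<lambda>t. ip w (\<iota> t))"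
  by (simp add: Modules.additive_def embedding_add inner_add_right)

lemma inner_embedding_scale: "ip w (\<iota> (smulT c t)) = c * ip w (\<iota> t)"
  by (simp add: embedding_scale inner_scale_right)

lemma eq_0_if_orthogonal_embedding:
  assumes "\<And>w. ip w (\<iota> t) = 0"
  shows "t = 0"
proof -
  have "\<iota> t = 0"
    using assms[of "\<iota> t"] by (rule inner_self_eq_0D)
  also have "0 = \<iota> 0"
    using embedding_add[of 0 0] by simp
  finally show ?thesis
    by (rule injD[OF inj_embedding])
qed

lemma contracted_pairing_eq_0:
  assumes "Modules.additive \<phi>" "\<And>c t. \<phi> (smulT c t) = c * \<phi> t"
    and "\<And>w. contracted_pairing ip \<iota> \<Psi> vs (\<lambda>t. ip w (\<iota> t)) = 0"
  shows "contracted_pairing ip \<iota> \<Psi> vs \<phi> = 0"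
proof -
  define u where "u =
    (\<Sum>ps | \<Psi> ps \<noteq> 0 \<and> length ps = Suc (length vs). \<Sum>\<sigma> | \<sigma> permutes {..<Suc (length vs)}.
       smulT (\<Psi> ps * (\<Prod>i<length vs. ip (vs ! i) (\<iota> (ps ! \<sigma> (Suc i))))) (ps ! \<sigma> 0))"
  have evaluate: "f u = contracted_pairing ip \<iota> \<Psi> vs f"
    if "Modules.additive f" "\<And>c t. f (smulT c t) = c * f t" for f
    unfolding u_def contracted_pairing_def Modules.additive.sum[OF that(1)] that(2) ..
  have "u = 0"
    using evaluate[OF additive_inner_embedding inner_embedding_scale] assms(3)
    by (intro eq_0_if_orthogonal_embedding) simp
  then show ?thesis
    using evaluate[OF assms(1,2)] Modules.additive.zero[OF assms(1)] by simp
qed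

end

locale fock_annihilation = embedded_inner_product_space +
  fixes g :: "'t::ab_group_add \<Rightarrow> complex"
  assumes additive_functional: "Modules.additive g"
    and functional_scale: "g (smulT c t) = cnj c * g t"
begin

lemma additive_dual_pairing: "Modules.additive (dual_pairing g)"
  using additive_functional by (simp add: Modules.additive_def dual_pairing_def)

lemma dual_pairing_scale: "dual_pairing g (smulT c t) = c * dual_pairing g t"
  by (simp add: functional_scale dual_pairing_def)

lemma fock_pairing_annihilation_eq_0:
  assumes "fock_fin \<Psi>"
    and "\<And>ws'. length ws' = Suc (length ws) \<Longrightarrow> fock_pairing ip \<iota> \<Psi> ws' = 0"
  shows "fock_pairing ip \<iota> (annihilation g \<Psi>) ws = 0"
proof -
  have "contracted_pairing ip \<iota> \<Psi> (permute_list \<tau> ws) (dual_pairing g) = 0" for \<tau>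
  proof (rule contracted_pairing_eq_0)
    show "contracted_pairing ip \<iota> \<Psi> (permute_list \<tau> ws) (\<lambda>t. ip w (\<iota> t)) = 0" for w
      using fock_pairing_Cons[of ip \<iota> \<Psi> w "permute_list \<tau> ws"] assms(2) by (simp del: fact_Suc)
  qed (simp_all add: additive_dual_pairing dual_pairing_scale)
  then show ?thesis
    by (simp add: fock_pairing_annihilation assms(1))
qed

lemma fock_pairing_annihilation_pow_eq_0:
  assumes "fock_fin \<Psi>"
    and "\<And>ws'. length ws' = length ws + k \<Longrightarrow> fock_pairing ip \<iota> \<Psi> ws' = 0"
  shows "fock_pairing ip \<iota> ((annihilation g ^^ k) \<Psi>) ws = 0"
  using assms(2)
proof (induction k arbitrary: ws)
  case (Suc k)
  show ?case
    using fock_pairing_annihilation_eq_0[OF fock_fin_annihilation_pow[OF assms(1)]] Suc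
    by simp
qed simp

lemma fock_pairing_eq_0_if_exp_annihilation_eq_0:
  assumes fin: "fock_fin D" and exp_D: "\<And>ws. fock_pairing ip \<iota> (exp_annihilation g D) ws = 0"
  shows "fock_pairing ip \<iota> D ws = 0"
proof -
  have "\<forall>ws. length ws = n \<longrightarrow> fock_pairing ip \<iota> D ws = 0" for n
  proof (induction n rule: nat_descend_induct[of "fock_degree D"])
    case (base n)
    have "{ps. D ps \<noteq> 0 \<and> length ps = length ws} = {}" if "length ws = n" for ws
      using that base length_le_fock_degree[OF fin] by force
    then show ?case
      unfolding fock_pairing_def by (metis sum.empty)
  next
    case (descend n)
    have "fock_pairing ip \<iota> D ws = 0" if "length ws = n" for ws
    proof -
      have "fock_pairing ip \<iota> ((annihilation g ^^ k) D) ws = 0" if "k > 0" for k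
        using that \<open>length ws = n\<close> descend.IH[of "n + k"]
        by (intro fock_pairing_annihilation_pow_eq_0[OF fin]) simp
      then have "fock_pairing ip \<iota> (exp_annihilation g D) ws = fock_pairing ip \<iota> D ws"
        unfolding fock_pairing_exp_annihilation[OF fin order.refl]
        by (subst sum.mono_neutral_right[where S = "{0}"]) auto
      then show ?thesis
        using exp_D by simp
    qed
    then show ?case
      by blast
  qed
  then show ?thesis
    by blast
qed

lemma fock_eq_if_exp_annihilation_fock_eq:
  assumes fin: "fock_fin \<Psi>" "fock_fin \<Phi>"
    and "fock_eq ip \<iota> (exp_annihilation g \<Psi>) (exp_annihilation g \<Phi>)"
  shows "fock_eq ip \<iota> \<Psi> \<Phi>"
proof -
  have "fock_pairing ip \<iota> (exp_annihilation g (\<lambda>ps. \<Psi> ps - \<Phi> ps)) ws = 0" for ws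
    using assms(3) unfolding fock_eq_def fock_pairing_exp_annihilation_diff[OF fin] by simp
  then have "fock_pairing ip \<iota> (\<lambda>ps. \<Psi> ps - \<Phi> ps) ws = 0" for ws
    by (rule fock_pairing_eq_0_if_exp_annihilation_eq_0[OF fock_fin_diff[OF fin]])
  then show ?thesis
    unfolding fock_eq_def fock_pairing_diff[OF fin] by simp
qed

end

theorem proposition2p9:
  fixes smulH :: "complex \<Rightarrow> 'h::ab_group_add \<Rightarrow> 'h"
    and ip :: "'h \<Rightarrow> 'h \<Rightarrow> complex"
    and smulT :: "complex \<Rightarrow> 't::{ab_group_add,topological_space} \<Rightarrow> 't"
    and \<iota> :: "'t \<Rightarrow> 'h"
    and g :: "'t \<Rightarrow> complex"
  assumes "complex_hilbert_space smulH ip"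
    and "complex_tvs smulT"
    and "continuous_dense_embedding smulT smulH ip \<iota>"
    and "g \<in> antidual smulT"
  shows "\<forall>\<Psi> \<Phi>. fock_fin \<Psi> \<longrightarrow> fock_fin \<Phi> \<longrightarrow>
           fock_eq ip \<iota> (exp_annihilation g \<Psi>) (exp_annihilation g \<Phi>) \<longrightarrow>
           fock_eq ip \<iota> \<Psi> \<Phi>"
proof -
  interpret fock_annihilation smulH ip smulT \<iota> g
  proof (intro fock_annihilation.intro embedded_inner_product_space.intro fock_annihilation_axioms.intro)
    show "complex_inner_product smulH ip"
      using assms(1) by (simp add: complex_hilbert_space_def)
    show "Vector_Spaces.linear smulT smulH \<iota>" "inj \<iota>"
      using assms(3) by (simp_all add: continuous_dense_embedding_def)
    show "Modules.additive g" "g (smulT c t) = cnj c * g t" for c t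
      using assms(4) by (simp_all add: antidual_def Modules.additive_def)
  qed
  show ?thesis
    using fock_eq_if_exp_annihilation_fock_eq by blast
qed

end
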